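(* For every integer $n\geq 2$, the sequence $a_k=k^n/k!$, $k=1,2,\ldots$, is unimodal and has a unique maximizer, which is either $k=\lfloor e^{w(n)}\rfloor$ or $k=\lfloor e^{w(n)}\rfloor+1$.
   Context: $w(n)$ denotes Lambert's W function, i.e. the unique real $w>0$ with $n=we^{w}$. $\lfloor x\rfloor$ is the integer part of $x$. A sequence is unimodal if it is weakly increasing up to some index and weakly decreasing afterwards. *)

theory Defs
  imports Complex_Main
begin

definition lambertW :: "real \<Rightarrow> real" where
  "lambertW x = (THE w. w > 0 \<and> x = w * exp w)"

definition unimodal_seq :: "(nat \<Rightarrow> real) \<Rightarrow> bool" where
  "unimodal_seq a \<longleftrightarrow> (\<exists>m\<ge>1.
      (\<forall>i j. 1 \<le> i \<and> i \<le> j \<and> j \<le> m \<longrightarrow> a i \<le> a j) \<and>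
      (\<forall>i j. m \<le> i \<and> i \<le> j \<longrightarrow> a j \<le> a i))"

end

theory Submission
  imports Defs
begin

(*
  Write a_k = k^n / k! and let w = W(n), x = e^w, so that n = w x.  Since
  a_(k+1) / a_k = (k+1)^(n-1) / k^n, the sign of ln a_(k+1) - ln a_k is the sign
  of (n-1) ln(k+1) - n ln k.  Elementary estimates of ln(k+1) - ln k show that
  this is positive whenever k + 1 <= x and negative whenever k >= x.  Hence the
  sequence strictly increases up to floor x and strictly decreases from
  floor x + 1 on; the single undecided step between floor x and floor x + 1 is
  never a tie, because k^n = (k+1)^(n-1) is impossible for coprime k, k+1.
*)

definition power_fact_seq :: "nat \<Rightarrow> nat \<Rightarrow> real" where
  "power_fact_seq n k = real k ^ n / fact k"

lemma power_fact_seq_Suc: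
  assumes "n \<ge> 1"
  shows "power_fact_seq n (Suc k) = real (Suc k) ^ (n - 1) / fact k"
proof -
  have "real (Suc k) ^ n = real (Suc k) * real (Suc k) ^ (n - 1)"
    using assms by (simp add: power_eq_if)
  then show ?thesis by (simp add: power_fact_seq_def)
qed

lemma power_fact_seq_pos: "k \<ge> 1 \<Longrightarrow> power_fact_seq n k > 0"
  by (simp add: power_fact_seq_def)

lemma power_fact_seq_log_step:
  assumes "n \<ge> 1" "k \<ge> 1"
  shows "ln (power_fact_seq n (Suc k)) - ln (power_fact_seq n k)
           = (real n - 1) * ln (real k + 1) - real n * ln (real k)"
proof -
  have "ln (power_fact_seq n (Suc k)) = (real n - 1) * ln (real k + 1) - ln (fact k)"
    using power_fact_seq_Suc[OF assms(1)] assms by (simp add: ln_div ln_realpow of_nat_diff add.commute)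
  moreover have "ln (power_fact_seq n k) = real n * ln (real k) - ln (fact k)"
    using assms(2) by (simp add: power_fact_seq_def ln_div ln_realpow)
  ultimately show ?thesis by simp
qed

(* For c = w e^w > 1 and 1 <= k <= e^w - 1 the step exponent is positive:
   ln k <= ln (e^w - 1) <= w - 1/e^w = (c-1)/e^w <= (c-1)/(k+1) < (c-1)(ln(k+1) - ln k). *)
lemma log_step_increase:
  fixes c w k :: real
  assumes "c > 1" "c = w * exp w" "k \<ge> 1" "k + 1 \<le> exp w"
  shows "c * ln k < (c - 1) * ln (k + 1)"
proof -
  let ?x = "exp w"
  have x: "1 < ?x" using assms(3,4) by linarith
  have "ln k \<le> ln (?x - 1)" using assms(3,4) by (intro ln_mono) auto
  also have "\<dots> \<le> w - 1 / ?x"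
  proof -
    have "ln (?x - 1) - ln ?x \<le> ((?x - 1) - ?x) / ?x"
      using x by (intro ln_diff_le) auto
    moreover have "((?x - 1) - ?x) / ?x = - (1 / ?x)" by simp
    moreover have "ln ?x = w" by simp
    ultimately show ?thesis by linarith
  qed
  also have "\<dots> = (c - 1) / ?x" using assms(2) by (simp add: field_simps)
  also have "\<dots> \<le> (c - 1) / (k + 1)"
    using assms by (intro divide_left_mono) auto
  also have "\<dots> < (c - 1) * (ln (k + 1) - ln k)"
  proof -
    have "ln k - ln (k + 1) < (k - (k + 1)) / (k + 1)"
      using assms(3) by (intro ln_diff_less) auto
    moreover have "(k - (k + 1)) / (k + 1) = - (1 / (k + 1))" by simp
    ultimately have "1 / (k + 1) < ln (k + 1) - ln k" by linarith
    then have "(c - 1) * (1 / (k + 1)) < (c - 1) * (ln (k + 1) - ln k)"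
      using assms(1) by (intro mult_strict_left_mono) auto
    then show ?thesis by simp
  qed
  finally have "ln k < (c - 1) * ln (k + 1) - (c - 1) * ln k"
    by (simp only: right_diff_distrib)
  then show ?thesis by (simp only: left_diff_distrib mult_1_left)
qed

(* For k >= e^w the step exponent is negative:
   (c-1)(ln(k+1) - ln k) < (c-1)/k <= (c-1)/e^w < c/e^w = w <= ln k. *)
lemma log_step_decrease:
  fixes c w k :: real
  assumes "c > 1" "c = w * exp w" "exp w \<le> k"
  shows "(c - 1) * ln (k + 1) < c * ln k"
proof -
  let ?x = "exp w"
  have k: "k > 0" using assms(3) exp_gt_zero[of w] by linarith
  have "(c - 1) * (ln (k + 1) - ln k) < (c - 1) / k"
  proof -
    have "ln (k + 1) - ln k < ((k + 1) - k) / k"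
      using k by (intro ln_diff_less) auto
    then show ?thesis using assms(1) by (simp add: divide_inverse)
  qed
  also have "\<dots> \<le> (c - 1) / ?x"
    using assms k by (intro divide_left_mono) auto
  also have "\<dots> < c / ?x" by (simp add: divide_strict_right_mono)
  also have "\<dots> = ln ?x" using assms(2) by simp
  also have "\<dots> \<le> ln k" using assms(3) by (intro ln_mono) auto
  finally show ?thesis by (simp add: algebra_simps)
qed

lemma power_fact_seq_increasing:
  assumes "n \<ge> 2" "real n = w * exp w" "k \<ge> 1" "real k + 1 \<le> exp w"
  shows "power_fact_seq n k < power_fact_seq n (Suc k)"
proof -
  have "real n * ln (real k) < (real n - 1) * ln (real k + 1)"
    using assms by (intro log_step_increase) auto
  then have "ln (power_fact_seq n k) < ln (power_fact_seq n (Suc k))"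
    using power_fact_seq_log_step[of n k] assms by simp
  then show ?thesis using power_fact_seq_pos assms(3) by simp
qed

lemma power_fact_seq_decreasing:
  assumes "n \<ge> 2" "real n = w * exp w" "exp w \<le> real k"
  shows "power_fact_seq n (Suc k) < power_fact_seq n k"
proof -
  have "k \<ge> 1" using assms(3) exp_gt_zero[of w] by (cases k) auto
  have "(real n - 1) * ln (real k + 1) < real n * ln (real k)"
    using assms by (intro log_step_decrease) auto
  then have "ln (power_fact_seq n (Suc k)) < ln (power_fact_seq n k)"
    using power_fact_seq_log_step[of n k] assms \<open>k \<ge> 1\<close> by simp
  then show ?thesis using power_fact_seq_pos \<open>k \<ge> 1\<close> by simp
qed

(* Consecutive terms never tie: k^n = (k+1)^(n-1) is impossible, since the two
   sides are coprime and the right one exceeds 1. *)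
lemma power_fact_seq_step_neq:
  assumes "n \<ge> 2" "k \<ge> 1"
  shows "power_fact_seq n (Suc k) \<noteq> power_fact_seq n k"
proof
  assume "power_fact_seq n (Suc k) = power_fact_seq n k"
  then have "real (Suc k) ^ (n - 1) = real k ^ n"
    using power_fact_seq_Suc[of n k] assms(1) by (simp add: power_fact_seq_def)
  then have eq: "Suc k ^ (n - 1) = k ^ n" by (metis of_nat_eq_iff of_nat_power)
  have "coprime (Suc k ^ (n - 1)) (k ^ n)" by simp
  then have "coprime (Suc k ^ (n - 1)) (Suc k ^ (n - 1))" by (simp only: eq)
  then have "Suc k ^ (n - 1) = 1" by simp
  moreover have "1 < Suc k ^ (n - 1)" using assms by (intro one_less_power) auto
  ultimately show False by (metis less_irrefl)
qed

(* w e^w is strictly increasing on [0, oo), which makes W well defined. *)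
lemma lambertW_strict_mono: "strict_mono_on {0..} (\<lambda>w::real. w * exp w)"
  by (rule strict_mono_onI) (auto intro!: mult_strict_mono)

(* W(y) exists for y > 0: the intermediate value theorem gives a root of
   w e^w = y in [0, y], and strict monotonicity makes it the unique one. *)
lemma lambertW_eq:
  fixes y :: real
  assumes "y > 0"
  shows "lambertW y * exp (lambertW y) = y"
proof -
  have low: "0 * exp 0 \<le> y" using assms by simp
  have high: "y \<le> y * exp y" using assms by simp
  have cont: "\<forall>t. 0 \<le> t \<and> t \<le> y \<longrightarrow> isCont (\<lambda>w. w * exp w) t"
    by (intro allI impI continuous_intros)
  obtain w where w: "0 \<le> w" "w * exp w = y"
    using IVT[of "\<lambda>w. w * exp w" 0 y y, OF low high less_imp_le[OF assms] cont] by blast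
  have "w \<noteq> 0" using w(2) assms by auto
  with w(1) have w_pos: "w > 0" by simp
  have "lambertW y = w" unfolding lambertW_def
  proof (rule the_equality)
    fix v assume v: "v > 0 \<and> y = v * exp v"
    show "v = w"
    proof (rule strict_mono_on_eqD[OF lambertW_strict_mono])
      show "w * exp w = v * exp v" using v w(2) by simp
    qed (use v w(1) in auto)
  qed (use w w_pos in auto)
  then show ?thesis using w by simp
qed

lemma strict_peak_unimodal:
  fixes a :: "nat \<Rightarrow> real" and m :: nat
  assumes "m \<ge> 1"
    and up: "\<And>k. 1 \<le> k \<Longrightarrow> k < m \<Longrightarrow> a k < a (Suc k)"
    and down: "\<And>k. m \<le> k \<Longrightarrow> a (Suc k) < a k"
  shows "unimodal_seq a" and "\<And>j. 1 \<le> j \<Longrightarrow> j \<noteq> m \<Longrightarrow> a j < a m"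
proof -
  have inc: "a i < a j" if "1 \<le> i" "i < j" "j \<le> m" for i j
    by (rule lift_Suc_mono_less_ivl[of "{1..<m}"]) (use up that in auto)
  have dec: "a j < a i" if "m \<le> i" "i < j" for i j
  proof -
    have "- a i < - a j"
      by (rule lift_Suc_mono_less_ivl[of "{m..}" "\<lambda>k. - a k"]) (use down that in auto)
    then show ?thesis by simp
  qed
  show "unimodal_seq a"
    unfolding unimodal_seq_def using inc dec assms(1) by (intro exI[of _ m]) (auto simp: le_less)
  show "a j < a m" if "1 \<le> j" "j \<noteq> m" for j
    using inc[of j m] dec[of m j] that by (cases "j < m") auto
qed

(* The peak of k^n / k! is floor (e^w) or floor (e^w) + 1, where n = w e^w:
   below floor (e^w) the sequence increases, above floor (e^w) + 1 it decreases,
   and the step in between goes strictly one way or the other. *)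
lemma power_fact_seq_peak:
  assumes n: "n \<ge> 2" and w: "real n = w * exp w"
  obtains m where "m \<ge> 1" "int m = \<lfloor>exp w\<rfloor> \<or> int m = \<lfloor>exp w\<rfloor> + 1"
    "\<And>k. 1 \<le> k \<Longrightarrow> k < m \<Longrightarrow> power_fact_seq n k < power_fact_seq n (Suc k)"
    "\<And>k. m \<le> k \<Longrightarrow> power_fact_seq n (Suc k) < power_fact_seq n k"
proof -
  have "w > 0"
  proof (rule ccontr)
    assume "\<not> w > 0"
    then have "w * exp w \<le> 0" by (simp add: mult_nonpos_nonneg)
    with n w show False by simp
  qed
  define f where "f = nat \<lfloor>exp w\<rfloor>"
  have f_floor: "int f = \<lfloor>exp w\<rfloor>" using \<open>w > 0\<close> by (simp add: f_def)
  have f_le: "real f \<le> exp w" and f_gt: "exp w < real f + 1"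
    using f_floor by (metis of_int_floor_le of_int_of_nat_eq, linarith)
  have "1 \<le> \<lfloor>exp w\<rfloor>" using \<open>w > 0\<close> by (simp add: le_floor_iff)
  then have f_pos: "f \<ge> 1" using f_floor by linarith
  define m where "m = (if power_fact_seq n f < power_fact_seq n (Suc f) then Suc f else f)"
  show ?thesis
  proof (rule that[of m])
    show "m \<ge> 1" "int m = \<lfloor>exp w\<rfloor> \<or> int m = \<lfloor>exp w\<rfloor> + 1"
      using f_pos f_floor by (auto simp: m_def)
  next
    fix k assume k: "1 \<le> k" "k < m"
    show "power_fact_seq n k < power_fact_seq n (Suc k)"
    proof (cases "k < f")
      case True
      then have "real k + 1 \<le> exp w" using f_le by linarith
      then show ?thesis using power_fact_seq_increasing[OF n w k(1)] by blast
    next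
      case False
      with k have "k = f" "power_fact_seq n f < power_fact_seq n (Suc f)"
        by (auto simp: m_def split: if_splits)
      then show ?thesis by simp
    qed
  next
    fix k assume k: "m \<le> k"
    show "power_fact_seq n (Suc k) < power_fact_seq n k"
    proof (cases "k > f")
      case True
      then have "exp w \<le> real k" using f_gt by linarith
      then show ?thesis using power_fact_seq_decreasing[OF n w] by blast
    next
      case False
      with k have "k = f" "\<not> power_fact_seq n f < power_fact_seq n (Suc f)"
        by (auto simp: m_def split: if_splits)
      then show ?thesis using power_fact_seq_step_neq[OF n f_pos] by auto
    qed
  qed
qed

theorem proposition2:
  fixes n :: nat
  assumes "n \<ge> 2"
  defines "a \<equiv> (\<lambda>k::nat. real k ^ n / fact k)"
  shows "unimodal_seq a \<and>
         (\<exists>k\<ge>1. (\<forall>j\<ge>1. j \<noteq> k \<longrightarrow> a j < a k) \<and>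
                 (int k = \<lfloor>exp (lambertW (real n))\<rfloor> \<or>
                  int k = \<lfloor>exp (lambertW (real n))\<rfloor> + 1))"
proof -
  define w where "w = lambertW (real n)"
  have "real n = w * exp w" using lambertW_eq[of "real n"] assms(1) by (simp add: w_def)
  then obtain m where m: "m \<ge> 1" "int m = \<lfloor>exp w\<rfloor> \<or> int m = \<lfloor>exp w\<rfloor> + 1"
    "\<And>k. 1 \<le> k \<Longrightarrow> k < m \<Longrightarrow> power_fact_seq n k < power_fact_seq n (Suc k)"
    "\<And>k. m \<le> k \<Longrightarrow> power_fact_seq n (Suc k) < power_fact_seq n k"
    using power_fact_seq_peak[OF assms(1)] by blast
  have "a = power_fact_seq n" by (simp add: a_def power_fact_seq_def fun_eq_iff)
  then show ?thesis
    using strict_peak_unimodal[of m "power_fact_seq n", OF m(1,3,4)] m(1,2) unfolding w_def by blast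
qed

end
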